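(* Let $\alpha\in\mathbb{C}$ be arbitrary. Then there exists an injective homomorphism of Lie superalgebras $\rho_{\alpha}:\Gamma(2,-1-\alpha,\alpha-1)\to P^+(4)$ whose image $\Gamma_\alpha=\rho_\alpha(\Gamma(2,-1-\alpha,\alpha-1))$ is the linear span of the following seventeen elements of $P^+(4)$: $$E^1_\alpha=t^2,\quad F^1_\alpha=\tau^2-2\alpha t^{-2}\xi_1\xi_2\eta_1\eta_2,\quad H^1_\alpha=t\tau,$$ $$E^2_\alpha=\xi_1\xi_2,\quad F^2_\alpha=\eta_1\eta_2,\quad H^2_\alpha=\xi_1\eta_1+\xi_2\eta_2,$$ $$E^3_\alpha=\xi_1\eta_2,\quad F^3_\alpha=\xi_2\eta_1,\quad H^3_\alpha=\xi_1\eta_1-\xi_2\eta_2,$$ $$T^1_\alpha=t\eta_1,\quad T^2_\alpha=t\eta_2,\quad T^3_\alpha=t\xi_1,\quad T^4_\alpha=t\xi_2,$$ $$D^1_\alpha=\tau\xi_1+\alpha t^{-1}\xi_1\xi_2\eta_2,\quad D^2_\alpha=\tau\xi_2-\alpha t^{-1}\xi_1\xi_2\eta_1,$$ $$D^3_\alpha=\tau\eta_1+\alpha t^{-1}\xi_2\eta_1\eta_2,\quad D^4_\alpha=\tau\eta_2-\alpha t^{-1}\xi_1\eta_1\eta_2.$$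
   Context: Definition of $\Gamma(\sigma_1,\sigma_2,\sigma_3)$: Let $V_1,V_2,V_3$ be two-dimensional complex vector spaces, each with a non-degenerate skew-symmetric bilinear form $\psi_i$. Let $\mathfrak{g}_{\bar0}=\mathfrak{sp}(\psi_1)\oplus\mathfrak{sp}(\psi_2)\oplus\mathfrak{sp}(\psi_3)$ and $\mathfrak{g}_{\bar1}=V_1\otimes V_2\otimes V_3$, with $\mathfrak{g}_{\bar0}$ acting on $\mathfrak{g}_{\bar1}$ by the tensor product of the standard representations. For $x_i,y_i\in V_i$ let $P_i(x_i,y_i)\in\mathfrak{sp}(\psi_i)$ be defined by $P_i(x_i,y_i)z_i=\psi_i(y_i,z_i)x_i-\psi_i(z_i,x_i)y_i$. The bracket of two odd elements is $[x_1\otimes x_2\otimes x_3,\,y_1\otimes y_2\otimes y_3]=\sigma_1\psi_2(x_2,y_2)\psi_3(x_3,y_3)P_1(x_1,y_1)+\sigma_2\psi_1(x_1,y_1)\psi_3(x_3,y_3)P_2(x_2,y_2)+\sigma_3\psi_1(x_1,y_1)\psi_2(x_2,y_2)P_3(x_3,y_3)$, where $\sigma_1,\sigma_2,\sigma_3\in\mathbb{C}$ satisfy $\sigma_1+\sigma_2+\sigma_3=0$ (which makes this a Lie superalgebra); the resulting Lie superalgebra is denoted $\Gamma(\sigma_1,\sigma_2,\sigma_3)$ (it is isomorphic to $D(2,1;\sigma_1/\sigma_2)$ when all $\sigma_i\neq0$). Definition of $P^+(4)$: the Poisson superalgebra of differential operators on the supercircle $S^{1|2}$. As a vector space it consists of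 finite sums $\sum_{i\ge0} a_i(t)\tau^i\otimes\omega_i$ with $a_i\in\mathbb{C}[t,t^{-1}]$, $\tau$ an even variable commuting with $t$, and $\omega_i$ in the Grassmann algebra $\Lambda(\xi_1,\xi_2,\eta_1,\eta_2)$ on four odd generators. For homogeneous $A$ of parity $p(A)$, the bracket is $$\{A,B\}=\partial_\tau A\,\partial_t B-\partial_t A\,\partial_\tau B+(-1)^{p(A)+1}\sum_{i=1}^{2}\big(\partial_{\xi_i}A\,\partial_{\eta_i}B+\partial_{\eta_i}A\,\partial_{\xi_i}B\big),$$ where derivatives with respect to odd variables are left derivatives. *)

theory Defs
  imports Complex_Main
begin

section \<open>The Poisson superalgebra P^+(4)\<close>

text \<open>A monomial t^j tau^i xi_S, where the odd generators xi1, xi2, eta1, eta2 are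
  numbered 0, 1, 2, 3 and xi_S denotes the product of the generators in S in
  increasing order.\<close>

type_synonym pmono = "int \<times> nat \<times> nat set"
type_synonym P4 = "pmono \<Rightarrow> complex"

definition psupp :: "P4 \<Rightarrow> pmono set" where
  "psupp f = {m. f m \<noteq> 0}"

definition P4_carrier :: "P4 set" where
  "P4_carrier = {f. finite (psupp f) \<and> (\<forall>j i S. f (j, i, S) \<noteq> 0 \<longrightarrow> S \<subseteq> {0..<4})}"

definition padd :: "P4 \<Rightarrow> P4 \<Rightarrow> P4" where
  "padd f g = (\<lambda>m. f m + g m)"

definition pscale :: "complex \<Rightarrow> P4 \<Rightarrow> P4" where
  "pscale c f = (\<lambda>m. c * f m)"

text \<open>sign of reordering xi_S xi_T into increasing order\<close>
definition gsign :: "nat set \<Rightarrow> nat set \<Rightarrow> complex" where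
  "gsign S T = (-1) ^ card {(a, b). a \<in> S \<and> b \<in> T \<and> b < a}"

definition mcoef :: "pmono \<Rightarrow> pmono \<Rightarrow> pmono \<Rightarrow> complex" where
  "mcoef m1 m2 m =
     (case m1 of (j1, i1, S1) \<Rightarrow> case m2 of (j2, i2, S2) \<Rightarrow> case m of (j, i, S) \<Rightarrow>
       if j1 + j2 = j \<and> i1 + i2 = i \<and> S1 \<inter> S2 = {} \<and> S1 \<union> S2 = S
       then gsign S1 S2 else 0)"

definition pmult :: "P4 \<Rightarrow> P4 \<Rightarrow> P4" where
  "pmult f g = (\<lambda>m. \<Sum>p \<in> psupp f \<times> psupp g. f (fst p) * g (snd p) * mcoef (fst p) (snd p) m)"

definition d_t :: "P4 \<Rightarrow> P4" where
  "d_t f = (\<lambda>(j, i, S). of_int (j + 1) * f (j + 1, i, S))"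

definition d_tau :: "P4 \<Rightarrow> P4" where
  "d_tau f = (\<lambda>(j, i, S). of_nat (i + 1) * f (j, i + 1, S))"

text \<open>left derivative with respect to the odd generator number k\<close>
definition d_odd :: "nat \<Rightarrow> P4 \<Rightarrow> P4" where
  "d_odd k f = (\<lambda>(j, i, S). if k \<in> S then 0
       else (-1) ^ card {s \<in> S. s < k} * f (j, i, insert k S))"

definition even_part :: "P4 \<Rightarrow> P4" where
  "even_part f = (\<lambda>(j, i, S). if even (card S) then f (j, i, S) else 0)"

definition odd_part :: "P4 \<Rightarrow> P4" where
  "odd_part f = (\<lambda>(j, i, S). if odd (card S) then f (j, i, S) else 0)"

text \<open>bracket for a homogeneous A; s = (-1)^(p(A)+1)\<close>
definition hbr :: "complex \<Rightarrow> P4 \<Rightarrow> P4 \<Rightarrow> P4" where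
  "hbr s A B = (\<lambda>m.
      pmult (d_tau A) (d_t B) m - pmult (d_t A) (d_tau B) m
    + s * (\<Sum>i\<in>{0::nat, 1}. pmult (d_odd i A) (d_odd (i + 2) B) m
                            + pmult (d_odd (i + 2) A) (d_odd i B) m))"

definition pbracket :: "P4 \<Rightarrow> P4 \<Rightarrow> P4" where
  "pbracket A B = padd (hbr (-1) (even_part A) B) (hbr 1 (odd_part A) B)"

section \<open>The Lie superalgebra Gamma(sigma1, sigma2, sigma3)\<close>

text \<open>V_i = C^2 (index type bool) with psi(x,y) = x_1 y_2 - x_2 y_1.\<close>

type_synonym vec2 = "bool \<Rightarrow> complex"
type_synonym mat2 = "bool \<Rightarrow> bool \<Rightarrow> complex"
type_synonym Gam = "mat2 \<times> mat2 \<times> mat2 \<times> (bool \<Rightarrow> bool \<Rightarrow> bool \<Rightarrow> complex)"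

definition psi :: "vec2 \<Rightarrow> vec2 \<Rightarrow> complex" where
  "psi x y = x False * y True - x True * y False"

definition mv :: "mat2 \<Rightarrow> vec2 \<Rightarrow> vec2" where
  "mv X x = (\<lambda>r. \<Sum>c\<in>UNIV. X r c * x c)"

definition is_sp :: "mat2 \<Rightarrow> bool" where
  "is_sp X \<longleftrightarrow> (\<forall>x y. psi (mv X x) y + psi x (mv X y) = 0)"

definition ev :: "bool \<Rightarrow> vec2" where
  "ev c = (\<lambda>r. if r = c then 1 else 0)"

text \<open>P(x,y) z = psi(y,z) x - psi(z,x) y, as a matrix\<close>
definition Pop :: "vec2 \<Rightarrow> vec2 \<Rightarrow> mat2" where
  "Pop x y = (\<lambda>r c. psi y (ev c) * x r - psi (ev c) x * y r)"

definition mcomm :: "mat2 \<Rightarrow> mat2 \<Rightarrow> mat2" where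
  "mcomm X Y = (\<lambda>r c. \<Sum>k\<in>UNIV. X r k * Y k c - Y r k * X k c)"

definition madd :: "mat2 \<Rightarrow> mat2 \<Rightarrow> mat2" where
  "madd X Y = (\<lambda>r c. X r c + Y r c)"

text \<open>action of sp1+sp2+sp3 on V1 (x) V2 (x) V3 (tensor product of standard reps)\<close>
definition gact :: "mat2 \<Rightarrow> mat2 \<Rightarrow> mat2 \<Rightarrow> (bool \<Rightarrow> bool \<Rightarrow> bool \<Rightarrow> complex)
                     \<Rightarrow> (bool \<Rightarrow> bool \<Rightarrow> bool \<Rightarrow> complex)" where
  "gact X1 X2 X3 v = (\<lambda>a b c. (\<Sum>a'\<in>UNIV. X1 a a' * v a' b c)
                             + (\<Sum>b'\<in>UNIV. X2 b b' * v a b' c)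
                             + (\<Sum>c'\<in>UNIV. X3 c c' * v a b c'))"

text \<open>bracket of odd elements, extended bilinearly from pure tensors of basis vectors\<close>
definition oddbr1 :: "complex \<Rightarrow> (bool \<Rightarrow> bool \<Rightarrow> bool \<Rightarrow> complex)
                      \<Rightarrow> (bool \<Rightarrow> bool \<Rightarrow> bool \<Rightarrow> complex) \<Rightarrow> mat2" where
  "oddbr1 s v w = (\<lambda>r q. \<Sum>a\<in>UNIV. \<Sum>b\<in>UNIV. \<Sum>c\<in>UNIV. \<Sum>a'\<in>UNIV. \<Sum>b'\<in>UNIV. \<Sum>c'\<in>UNIV.
      v a b c * w a' b' c' * s * psi (ev b) (ev b') * psi (ev c) (ev c') * Pop (ev a) (ev a') r q)"

definition oddbr2 :: "complex \<Rightarrow> (bool \<Rightarrow> bool \<Rightarrow> bool \<Rightarrow> complex)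
                      \<Rightarrow> (bool \<Rightarrow> bool \<Rightarrow> bool \<Rightarrow> complex) \<Rightarrow> mat2" where
  "oddbr2 s v w = (\<lambda>r q. \<Sum>a\<in>UNIV. \<Sum>b\<in>UNIV. \<Sum>c\<in>UNIV. \<Sum>a'\<in>UNIV. \<Sum>b'\<in>UNIV. \<Sum>c'\<in>UNIV.
      v a b c * w a' b' c' * s * psi (ev a) (ev a') * psi (ev c) (ev c') * Pop (ev b) (ev b') r q)"

definition oddbr3 :: "complex \<Rightarrow> (bool \<Rightarrow> bool \<Rightarrow> bool \<Rightarrow> complex)
                      \<Rightarrow> (bool \<Rightarrow> bool \<Rightarrow> bool \<Rightarrow> complex) \<Rightarrow> mat2" where
  "oddbr3 s v w = (\<lambda>r q. \<Sum>a\<in>UNIV. \<Sum>b\<in>UNIV. \<Sum>c\<in>UNIV. \<Sum>a'\<in>UNIV. \<Sum>b'\<in>UNIV. \<Sum>c'\<in>UNIV.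
      v a b c * w a' b' c' * s * psi (ev a) (ev a') * psi (ev b) (ev b') * Pop (ev c) (ev c') r q)"

definition Gam_carrier :: "Gam set" where
  "Gam_carrier = {(X1, X2, X3, v). is_sp X1 \<and> is_sp X2 \<and> is_sp X3}"

definition gadd :: "Gam \<Rightarrow> Gam \<Rightarrow> Gam" where
  "gadd x y = (case x of (X1, X2, X3, v) \<Rightarrow> case y of (Y1, Y2, Y3, w) \<Rightarrow>
      (madd X1 Y1, madd X2 Y2, madd X3 Y3, (\<lambda>a b c. v a b c + w a b c)))"

definition gscale :: "complex \<Rightarrow> Gam \<Rightarrow> Gam" where
  "gscale k x = (case x of (X1, X2, X3, v) \<Rightarrow>
      ((\<lambda>r c. k * X1 r c), (\<lambda>r c. k * X2 r c), (\<lambda>r c. k * X3 r c), (\<lambda>a b c. k * v a b c)))"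

definition gbracket :: "complex \<Rightarrow> complex \<Rightarrow> complex \<Rightarrow> Gam \<Rightarrow> Gam \<Rightarrow> Gam" where
  "gbracket s1 s2 s3 x y = (case x of (X1, X2, X3, v) \<Rightarrow> case y of (Y1, Y2, Y3, w) \<Rightarrow>
      (madd (mcomm X1 Y1) (oddbr1 s1 v w),
       madd (mcomm X2 Y2) (oddbr2 s2 v w),
       madd (mcomm X3 Y3) (oddbr3 s3 v w),
       (\<lambda>a b c. gact X1 X2 X3 w a b c - gact Y1 Y2 Y3 v a b c)))"

definition Gam_even :: "Gam \<Rightarrow> bool" where
  "Gam_even x \<longleftrightarrow> (case x of (X1, X2, X3, v) \<Rightarrow> v = (\<lambda>a b c. 0))"

definition Gam_odd :: "Gam \<Rightarrow> bool" where
  "Gam_odd x \<longleftrightarrow> (case x of (X1, X2, X3, v) \<Rightarrow>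
      X1 = (\<lambda>r c. 0) \<and> X2 = (\<lambda>r c. 0) \<and> X3 = (\<lambda>r c. 0))"

definition is_superhom :: "complex \<Rightarrow> complex \<Rightarrow> complex \<Rightarrow> (Gam \<Rightarrow> P4) \<Rightarrow> bool" where
  "is_superhom s1 s2 s3 \<rho> \<longleftrightarrow>
     \<rho> ` Gam_carrier \<subseteq> P4_carrier \<and>
     (\<forall>x\<in>Gam_carrier. \<forall>y\<in>Gam_carrier. \<rho> (gadd x y) = padd (\<rho> x) (\<rho> y)) \<and>
     (\<forall>k. \<forall>x\<in>Gam_carrier. \<rho> (gscale k x) = pscale k (\<rho> x)) \<and>
     (\<forall>x\<in>Gam_carrier. Gam_even x \<longrightarrow> odd_part (\<rho> x) = (\<lambda>m. 0)) \<and>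
     (\<forall>x\<in>Gam_carrier. Gam_odd x \<longrightarrow> even_part (\<rho> x) = (\<lambda>m. 0)) \<and>
     (\<forall>x\<in>Gam_carrier. \<forall>y\<in>Gam_carrier.
         \<rho> (gbracket s1 s2 s3 x y) = pbracket (\<rho> x) (\<rho> y))"

definition pm :: "complex \<Rightarrow> int \<Rightarrow> nat \<Rightarrow> nat set \<Rightarrow> P4" where
  "pm c j i S = (\<lambda>m. if m = (j, i, S) then c else 0)"

text \<open>xi1 = 0, xi2 = 1, eta1 = 2, eta2 = 3\<close>
definition Gamma_gens :: "complex \<Rightarrow> P4 list" where
  "Gamma_gens \<alpha> =
    [ pm 1 2 0 {},                                             \<comment> \<open>E1\<close>
      padd (pm 1 0 2 {}) (pm (-2 * \<alpha>) (-2) 0 {0, 1, 2, 3}),   \<comment> \<open>F1\<close>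
      pm 1 1 1 {},                                             \<comment> \<open>H1\<close>
      pm 1 0 0 {0, 1},                                         \<comment> \<open>E2\<close>
      pm 1 0 0 {2, 3},                                         \<comment> \<open>F2\<close>
      padd (pm 1 0 0 {0, 2}) (pm 1 0 0 {1, 3}),                \<comment> \<open>H2\<close>
      pm 1 0 0 {0, 3},                                         \<comment> \<open>E3\<close>
      pm 1 0 0 {1, 2},                                         \<comment> \<open>F3\<close>
      padd (pm 1 0 0 {0, 2}) (pm (-1) 0 0 {1, 3}),             \<comment> \<open>H3\<close>
      pm 1 1 0 {2},                                            \<comment> \<open>T1\<close>
      pm 1 1 0 {3},                                            \<comment> \<open>T2\<close>
      pm 1 1 0 {0},                                            \<comment> \<open>T3\<close>
      pm 1 1 0 {1},                                            \<comment> \<open>T4\<close>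
      padd (pm 1 0 1 {0}) (pm \<alpha> (-1) 0 {0, 1, 3}),             \<comment> \<open>D1\<close>
      padd (pm 1 0 1 {1}) (pm (-\<alpha>) (-1) 0 {0, 1, 2}),          \<comment> \<open>D2\<close>
      padd (pm 1 0 1 {2}) (pm \<alpha> (-1) 0 {1, 2, 3}),             \<comment> \<open>D3\<close>
      padd (pm 1 0 1 {3}) (pm (-\<alpha>) (-1) 0 {0, 2, 3}) ]        \<comment> \<open>D4\<close>"

definition lin_span :: "P4 list \<Rightarrow> P4 set" where
  "lin_span L = {f. \<exists>c::nat \<Rightarrow> complex. f = (\<lambda>m. \<Sum>k<length L. c k * (L ! k) m)}"

end

theory Submission
  imports Defs
begin

text \<open>
  An element of \<open>\<Gamma>(2, -1-\<alpha>, \<alpha>-1)\<close> is determined by seventeen coordinates (three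
  traceless \<open>2\<times>2\<close> matrices and eight odd coefficients), and \<open>\<rho>\<^sub>\<alpha>\<close> sends it to the
  corresponding linear combination of the seventeen generators. That \<open>\<rho>\<^sub>\<alpha>\<close> respects
  the bracket is then a polynomial identity in the coordinates of the two arguments. It is
  verified by representing elements of \<open>P\<^sup>+(4)\<close> as lists of monomial terms, on which the
  derivatives, the supercommutative product and hence the Poisson bracket act by explicit list
  operations, and collecting like terms. Injectivity and the description of the image hold
  because every coordinate of \<open>x\<close> can be read off from the coefficients of \<open>\<rho>\<^sub>\<alpha> x\<close> at the
  leading monomials of the generators.
\<close>

section \<open>Odd monomials as bit masks\<close>

text \<open>
  Membership,
  cardinality and the reordering sign \<open>gsign\<close> become computable functions of the
  mask, so the simplifier can evaluate them on concrete monomials.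
\<close>

type_synonym odd_mask = "bool \<times> bool \<times> bool \<times> bool"

fun mask_mem :: "nat \<Rightarrow> odd_mask \<Rightarrow> bool" where
  "mask_mem k (a, b, c, d) \<longleftrightarrow> (k = 0 \<and> a) \<or> (k = 1 \<and> b) \<or> (k = 2 \<and> c) \<or> (k = 3 \<and> d)"

definition mask_set :: "odd_mask \<Rightarrow> nat set" where
  "mask_set s = {k. mask_mem k s}"

fun mask_remove :: "nat \<Rightarrow> odd_mask \<Rightarrow> odd_mask" where
  "mask_remove k (a, b, c, d) = (a \<and> k \<noteq> 0, b \<and> k \<noteq> 1, c \<and> k \<noteq> 2, d \<and> k \<noteq> 3)"

fun mask_union :: "odd_mask \<Rightarrow> odd_mask \<Rightarrow> odd_mask" where
  "mask_union (a, b, c, d) (a', b', c', d') = (a \<or> a', b \<or> b', c \<or> c', d \<or> d')"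

fun mask_disjoint :: "odd_mask \<Rightarrow> odd_mask \<Rightarrow> bool" where
  "mask_disjoint (a, b, c, d) (a', b', c', d') \<longleftrightarrow>
     \<not> (a \<and> a') \<and> \<not> (b \<and> b') \<and> \<not> (c \<and> c') \<and> \<not> (d \<and> d')"

fun mask_card :: "odd_mask \<Rightarrow> nat" where
  "mask_card (a, b, c, d) = length (filter id [a, b, c, d])"

fun mask_count_below :: "nat \<Rightarrow> odd_mask \<Rightarrow> nat" where
  "mask_count_below k (a, b, c, d) = length (filter id [a \<and> 0 < k, b \<and> 1 < k, c \<and> 2 < k, d \<and> 3 < k])"

definition mask_inversions :: "odd_mask \<Rightarrow> odd_mask \<Rightarrow> nat" where
  "mask_inversions s t = length (filter (\<lambda>(a, b). mask_mem a s \<and> mask_mem b t)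
     [(1, 0), (2, 0), (2, 1), (3, 0), (3, 1), (3, 2)])"

lemma mem_mask_set [simp]: "k \<in> mask_set s \<longleftrightarrow> mask_mem k s"
  by (simp add: mask_set_def)

lemma mask_set_eq: "mask_set (a, b, c, d) =
    (if a then {0} else {}) \<union> (if b then {1} else {}) \<union> (if c then {2} else {}) \<union> (if d then {3} else {})"
  by auto

lemma mask_set_subset: "mask_set s \<subseteq> {0..<4}"
  by (cases s) auto

lemma mask_set_eq_iff: "mask_set s = mask_set t \<longleftrightarrow> s = t"
proof
  assume "mask_set s = mask_set t"
  then have "mask_mem k s \<longleftrightarrow> mask_mem k t" for k
    by (metis mem_mask_set)
  from this[of 0] this[of 1] this[of 2] this[of 3] show "s = t"
    by (cases s; cases t) auto
qed simp

lemma mask_set_remove: "mask_set (mask_remove k s) = mask_set s - {k}"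
  by (cases s) auto

lemma mask_set_union: "mask_set (mask_union s t) = mask_set s \<union> mask_set t"
  by (cases s; cases t) auto

lemma mask_set_disjoint_iff: "mask_set s \<inter> mask_set t = {} \<longleftrightarrow> mask_disjoint s t"
  by (cases s; cases t) auto

lemma card_set_filter_distinct: "distinct xs \<Longrightarrow> card (set (filter P xs)) = length (filter P xs)"
  by (metis distinct_card distinct_filter set_filter)

lemma card_mask_set: "card (mask_set s) = mask_card s"
proof -
  have "mask_set s = set (filter (\<lambda>k. mask_mem k s) [0, 1, 2, 3])"
    by (cases s) auto
  then have "card (mask_set s) = length (filter (\<lambda>k. mask_mem k s) [0, 1, 2, 3])"
    by (simp add: card_set_filter_distinct)
  then show ?thesis
    by (cases s) auto
qed

lemma card_mask_set_below: "card {x \<in> mask_set s. x < k} = mask_count_below k s"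
proof -
  have "{x \<in> mask_set s. x < k} = set (filter (\<lambda>j. mask_mem j s \<and> j < k) [0, 1, 2, 3])"
    by (cases s) auto
  then have "card {x \<in> mask_set s. x < k} = length (filter (\<lambda>j. mask_mem j s \<and> j < k) [0, 1, 2, 3])"
    by (simp add: card_set_filter_distinct)
  then show ?thesis
    by (cases s) auto
qed

lemma gsign_mask_set: "gsign (mask_set s) (mask_set t) = (-1) ^ mask_inversions s t"
proof -
  have "{(a, b). a \<in> mask_set s \<and> b \<in> mask_set t \<and> b < a} =
        set (filter (\<lambda>(a, b). mask_mem a s \<and> mask_mem b t) [(1, 0), (2, 0), (2, 1), (3, 0), (3, 1), (3, 2)])"
    by (cases s; cases t) auto
  then show ?thesis
    unfolding gsign_def mask_inversions_def by (simp add: card_set_filter_distinct)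
qed

section \<open>Elements of \<open>P\<^sup>+(4)\<close> as lists of terms\<close>

type_synonym mono_code = "int \<times> nat \<times> odd_mask"
type_synonym pterm = "mono_code \<times> complex"

definition poly_of_term :: "pterm \<Rightarrow> P4" where
  "poly_of_term t = (case t of ((j, i, s), c) \<Rightarrow> pm c j i (mask_set s))"

definition poly_of_terms :: "pterm list \<Rightarrow> P4" where
  "poly_of_terms L = (\<lambda>m. \<Sum>t\<leftarrow>L. poly_of_term t m)"

definition pzero :: P4 where
  "pzero = (\<lambda>m. 0)"

lemma poly_of_term_apply:
  "poly_of_term ((j, i, s), c) (j', i', S) = (if j' = j \<and> i' = i \<and> S = mask_set s then c else 0)"
  by (simp add: poly_of_term_def pm_def)

lemma poly_of_term_zero: "poly_of_term (\<mu>, 0) = pzero"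
  by (auto simp: poly_of_term_def pm_def pzero_def split: prod.split)

lemma padd_pzero [simp]: "padd pzero f = f" "padd f pzero = f"
  by (simp_all add: padd_def pzero_def)

lemma poly_of_terms_Nil: "poly_of_terms [] = pzero"
  by (simp add: poly_of_terms_def pzero_def)

lemma poly_of_terms_Cons: "poly_of_terms (t # L) = padd (poly_of_term t) (poly_of_terms L)"
  by (simp add: poly_of_terms_def padd_def)

lemma poly_of_terms_single: "poly_of_terms [t] = poly_of_term t"
  by (simp add: poly_of_terms_Cons poly_of_terms_Nil)

lemma poly_of_terms_append: "poly_of_terms (A @ B) = padd (poly_of_terms A) (poly_of_terms B)"
  by (simp add: poly_of_terms_def padd_def fun_eq_iff)

lemma poly_of_terms_apply:
  "poly_of_terms L (j, i, mask_set s) = sum_list (map snd (filter (\<lambda>t. fst t = (j, i, s)) L))"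
proof (induction L)
  case Nil
  then show ?case by (simp add: poly_of_terms_def)
next
  case (Cons t L)
  obtain j' i' s' c where "t = ((j', i', s'), c)"
    by (cases t) auto
  with Cons show ?case
    by (auto simp: poly_of_terms_Cons padd_def poly_of_term_apply mask_set_eq_iff)
qed

lemma psupp_padd: "psupp (padd f g) \<subseteq> psupp f \<union> psupp g"
  by (auto simp: psupp_def padd_def)

fun mono_of_code :: "mono_code \<Rightarrow> pmono" where
  "mono_of_code (j, i, s) = (j, i, mask_set s)"

lemma psupp_poly_of_terms: "psupp (poly_of_terms L) \<subseteq> mono_of_code ` fst ` set L"
proof (induction L)
  case Nil
  then show ?case by (simp add: poly_of_terms_Nil psupp_def pzero_def)
next
  case (Cons t L)
  have "psupp (poly_of_term t) \<subseteq> {mono_of_code (fst t)}"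
    by (auto simp: psupp_def poly_of_term_def pm_def split: prod.splits)
  moreover have "psupp (poly_of_terms (t # L)) \<subseteq> psupp (poly_of_term t) \<union> psupp (poly_of_terms L)"
    by (simp add: poly_of_terms_Cons psupp_padd)
  ultimately show ?case
    using Cons.IH by auto
qed

lemma finite_psupp_poly_of_terms: "finite (psupp (poly_of_terms L))"
  using psupp_poly_of_terms finite_subset by blast

lemma poly_of_terms_in_P4_carrier: "poly_of_terms L \<in> P4_carrier"
proof -
  have "S \<subseteq> {0..<4}" if "poly_of_terms L (j, i, S) \<noteq> 0" for j i S
  proof -
    have "(j, i, S) \<in> psupp (poly_of_terms L)"
      using that by (simp add: psupp_def)
    then obtain j' i' s where "(j, i, S) = mono_of_code (j', i', s)"
      using psupp_poly_of_terms[of L] by auto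
    then show ?thesis
      using mask_set_subset by simp
  qed
  then show ?thesis
    unfolding P4_carrier_def using finite_psupp_poly_of_terms by auto
qed

definition scale_terms :: "complex \<Rightarrow> pterm list \<Rightarrow> pterm list" where
  "scale_terms k L = map (\<lambda>(\<mu>, c). (\<mu>, k * c)) L"

lemma poly_of_terms_scale: "poly_of_terms (scale_terms k L) m = k * poly_of_terms L m"
  by (induction L)
    (auto simp: scale_terms_def poly_of_terms_def poly_of_term_def pm_def algebra_simps)

lemma poly_of_terms_zero: "list_all (\<lambda>t. snd t = 0) L \<Longrightarrow> poly_of_terms L = pzero"
  by (induction L) (auto simp: poly_of_terms_Nil poly_of_terms_Cons poly_of_term_zero)

fun insert_term :: "pterm \<Rightarrow> pterm list \<Rightarrow> pterm list" where
  "insert_term t [] = [t]"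
| "insert_term t (u # L) =
     (if fst t = fst u then (fst u, snd t + snd u) # L else u # insert_term t L)"

definition collect_terms :: "pterm list \<Rightarrow> pterm list" where
  "collect_terms L = foldr insert_term L []"

lemma poly_of_terms_insert_term: "poly_of_terms (insert_term t L) = poly_of_terms (t # L)"
  by (induction L)
    (auto simp: poly_of_terms_def poly_of_term_def pm_def fun_eq_iff algebra_simps split: prod.split)

lemma poly_of_terms_collect_terms: "poly_of_terms (collect_terms L) = poly_of_terms L"
  by (induction L) (simp_all add: collect_terms_def poly_of_terms_insert_term poly_of_terms_Cons)

lemma poly_of_terms_eqI:
  assumes "list_all (\<lambda>t. snd t = 0) (collect_terms (A @ scale_terms (-1) B))"
  shows "poly_of_terms A = poly_of_terms B"
proof -
  have "poly_of_terms (A @ scale_terms (-1) B) = pzero"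
    using poly_of_terms_zero[OF assms] by (simp add: poly_of_terms_collect_terms)
  then have "poly_of_terms A m - poly_of_terms B m = 0" for m
    by (metis poly_of_terms_append poly_of_terms_scale padd_def pzero_def
        mult_minus1 diff_conv_add_uminus)
  then show ?thesis
    by (simp add: fun_eq_iff)
qed

section \<open>Derivatives, product and bracket on term lists\<close>

definition padditive :: "(P4 \<Rightarrow> P4) \<Rightarrow> bool" where
  "padditive F \<longleftrightarrow> F pzero = pzero \<and> (\<forall>f g. F (padd f g) = padd (F f) (F g))"

lemma padditive_poly_of_terms:
  assumes "padditive F" and "\<And>t. F (poly_of_term t) = poly_of_terms (G t)"
  shows "F (poly_of_terms L) = poly_of_terms (List.bind L G)"
  using assms
  by (induction L) (auto simp: padditive_def poly_of_terms_Nil poly_of_terms_Cons poly_of_terms_append)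

lemma padditive_d_t: "padditive d_t"
  and padditive_d_tau: "padditive d_tau"
  and padditive_d_odd: "padditive (d_odd k)"
  and padditive_even_part: "padditive even_part"
  and padditive_odd_part: "padditive odd_part"
  by (auto simp: padditive_def d_t_def d_tau_def d_odd_def even_part_def odd_part_def
      pzero_def padd_def fun_eq_iff algebra_simps)

definition d_t_term :: "pterm \<Rightarrow> pterm list" where
  "d_t_term t = (case t of ((j, i, s), c) \<Rightarrow> if j = 0 then [] else [((j - 1, i, s), of_int j * c)])"

definition d_tau_term :: "pterm \<Rightarrow> pterm list" where
  "d_tau_term t = (case t of ((j, i, s), c) \<Rightarrow> if i = 0 then [] else [((j, i - 1, s), of_nat i * c)])"

definition d_odd_term :: "nat \<Rightarrow> pterm \<Rightarrow> pterm list" where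
  "d_odd_term k t = (case t of ((j, i, s), c) \<Rightarrow>
     if mask_mem k s then [((j, i, mask_remove k s), (-1) ^ mask_count_below k s * c)] else [])"

definition even_part_term :: "pterm \<Rightarrow> pterm list" where
  "even_part_term t = (if even (mask_card (snd (snd (fst t)))) then [t] else [])"

definition odd_part_term :: "pterm \<Rightarrow> pterm list" where
  "odd_part_term t = (if odd (mask_card (snd (snd (fst t)))) then [t] else [])"

lemma d_t_poly_of_term: "d_t (poly_of_term t) = poly_of_terms (d_t_term t)"
proof -
  obtain j i s c where t: "t = ((j, i, s), c)"
    by (cases t) auto
  have "j' + 1 = j \<longleftrightarrow> j' = j - 1" for j'
    by auto
  then show ?thesis
    by (auto simp: t d_t_term_def d_t_def fun_eq_iff poly_of_terms_Nil poly_of_terms_single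
        poly_of_term_apply pzero_def)
qed

lemma d_tau_poly_of_term: "d_tau (poly_of_term t) = poly_of_terms (d_tau_term t)"
  by (cases t) (auto simp: d_tau_term_def d_tau_def fun_eq_iff poly_of_terms_Nil
      poly_of_terms_single poly_of_term_apply pzero_def)

lemma d_odd_poly_of_term: "d_odd k (poly_of_term t) = poly_of_terms (d_odd_term k t)"
proof -
  obtain j i s c where t: "t = ((j, i, s), c)"
    by (cases t) auto
  have remove: "k \<notin> S \<and> insert k S = mask_set s \<longleftrightarrow> mask_mem k s \<and> S = mask_set (mask_remove k s)" for S
    by (auto simp: mask_set_remove)
  have "{x \<in> mask_set (mask_remove k s). x < k} = {x \<in> mask_set s. x < k}"
    by (auto simp: mask_set_remove)
  then have count: "card {x \<in> mask_set (mask_remove k s). x < k} = mask_count_below k s"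
    by (simp only: card_mask_set_below)
  show ?thesis
  proof (rule ext, clarify)
    fix j' i' S
    show "d_odd k (poly_of_term t) (j', i', S) = poly_of_terms (d_odd_term k t) (j', i', S)"
      using remove[of S] count
      by (auto simp: t d_odd_term_def d_odd_def poly_of_terms_Nil poly_of_terms_single
          poly_of_term_apply pzero_def)
  qed
qed

lemma even_part_poly_of_term: "even_part (poly_of_term t) = poly_of_terms (even_part_term t)"
  by (cases t) (auto simp: even_part_term_def even_part_def fun_eq_iff poly_of_terms_Nil
      poly_of_terms_single poly_of_term_apply pzero_def card_mask_set)

lemma odd_part_poly_of_term: "odd_part (poly_of_term t) = poly_of_terms (odd_part_term t)"
  by (cases t) (auto simp: odd_part_term_def odd_part_def fun_eq_iff poly_of_terms_Nil
      poly_of_terms_single poly_of_term_apply pzero_def card_mask_set)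

lemmas d_t_poly_of_terms = padditive_poly_of_terms[OF padditive_d_t d_t_poly_of_term]
lemmas d_tau_poly_of_terms = padditive_poly_of_terms[OF padditive_d_tau d_tau_poly_of_term]
lemmas d_odd_poly_of_terms = padditive_poly_of_terms[OF padditive_d_odd d_odd_poly_of_term]
lemmas even_part_poly_of_terms = padditive_poly_of_terms[OF padditive_even_part even_part_poly_of_term]
lemmas odd_part_poly_of_terms = padditive_poly_of_terms[OF padditive_odd_part odd_part_poly_of_term]

lemma pmult_eq_sum_superset:
  assumes "finite A" "finite B" "psupp f \<subseteq> A" "psupp g \<subseteq> B"
  shows "pmult f g m = (\<Sum>p\<in>A \<times> B. f (fst p) * g (snd p) * mcoef (fst p) (snd p) m)"
  unfolding pmult_def
  by (rule sum.mono_neutral_left) (use assms in \<open>auto simp: psupp_def\<close>)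

lemma pmult_padd_left:
  assumes "finite (psupp f)" "finite (psupp g)" "finite (psupp h)"
  shows "pmult (padd f g) h = padd (pmult f h) (pmult g h)"
proof
  fix m
  let ?A = "psupp f \<union> psupp g" and ?B = "psupp h"
  let ?summand = "\<lambda>u p. u (fst p) * h (snd p) * mcoef (fst p) (snd p) m"
  have "pmult (padd f g) h m = (\<Sum>p\<in>?A \<times> ?B. ?summand (padd f g) p)"
    by (rule pmult_eq_sum_superset) (simp_all add: assms psupp_padd)
  also have "\<dots> = (\<Sum>p\<in>?A \<times> ?B. ?summand f p) + (\<Sum>p\<in>?A \<times> ?B. ?summand g p)"
    by (simp add: padd_def sum.distrib[symmetric] algebra_simps)
  also have "\<dots> = pmult f h m + pmult g h m"
    by (subst (1 2) pmult_eq_sum_superset[of ?A ?B]) (use assms in auto)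
  finally show "pmult (padd f g) h m = padd (pmult f h) (pmult g h) m"
    by (simp add: padd_def)
qed

lemma pmult_padd_right:
  assumes "finite (psupp f)" "finite (psupp g)" "finite (psupp h)"
  shows "pmult h (padd f g) = padd (pmult h f) (pmult h g)"
proof
  fix m
  let ?A = "psupp f \<union> psupp g" and ?B = "psupp h"
  let ?summand = "\<lambda>u p. h (fst p) * u (snd p) * mcoef (fst p) (snd p) m"
  have "pmult h (padd f g) m = (\<Sum>p\<in>?B \<times> ?A. ?summand (padd f g) p)"
    by (rule pmult_eq_sum_superset) (simp_all add: assms psupp_padd)
  also have "\<dots> = (\<Sum>p\<in>?B \<times> ?A. ?summand f p) + (\<Sum>p\<in>?B \<times> ?A. ?summand g p)"
    by (simp add: padd_def sum.distrib[symmetric] algebra_simps)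
  also have "\<dots> = pmult h f m + pmult h g m"
    by (subst (1 2) pmult_eq_sum_superset[of ?B ?A]) (use assms in auto)
  finally show "pmult h (padd f g) m = padd (pmult h f) (pmult h g) m"
    by (simp add: padd_def)
qed

lemma pmult_pzero_left: "pmult pzero g = pzero"
  and pmult_pzero_right: "pmult g pzero = pzero"
  by (simp_all add: pmult_def pzero_def psupp_def fun_eq_iff)

definition mult_term :: "pterm \<Rightarrow> pterm \<Rightarrow> pterm list" where
  "mult_term t1 t2 = (case t1 of ((j1, i1, s1), c1) \<Rightarrow> case t2 of ((j2, i2, s2), c2) \<Rightarrow>
     if mask_disjoint s1 s2
     then [((j1 + j2, i1 + i2, mask_union s1 s2), c1 * c2 * (-1) ^ mask_inversions s1 s2)]
     else [])"

definition mult_terms :: "pterm list \<Rightarrow> pterm list \<Rightarrow> pterm list" where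
  "mult_terms A B = List.bind A (\<lambda>t1. List.bind B (mult_term t1))"

lemma pmult_poly_of_term: "pmult (poly_of_term t1) (poly_of_term t2) = poly_of_terms (mult_term t1 t2)"
proof -
  obtain j1 i1 s1 c1 where t1: "t1 = ((j1, i1, s1), c1)"
    by (cases t1) auto
  obtain j2 i2 s2 c2 where t2: "t2 = ((j2, i2, s2), c2)"
    by (cases t2) auto
  have psupp_pm: "psupp (pm c j i S) = (if c = 0 then {} else {(j, i, S)})" for c j i S
    by (auto simp: psupp_def pm_def)
  show ?thesis
  proof (rule ext, clarify)
    fix j i S
    have "pmult (poly_of_term t1) (poly_of_term t2) (j, i, S) =
          c1 * c2 * mcoef (j1, i1, mask_set s1) (j2, i2, mask_set s2) (j, i, S)"
      by (simp only: pmult_def poly_of_term_def t1 t2 psupp_pm prod.case) (simp add: pm_def)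
    also have "\<dots> = poly_of_terms (mult_term t1 t2) (j, i, S)"
      by (auto simp: mcoef_def mult_term_def t1 t2 poly_of_terms_Nil poly_of_terms_single pzero_def
          poly_of_term_apply mask_set_disjoint_iff mask_set_union gsign_mask_set)
    finally show "pmult (poly_of_term t1) (poly_of_term t2) (j, i, S) = poly_of_terms (mult_term t1 t2) (j, i, S)" .
  qed
qed

lemma finite_psupp_poly_of_term: "finite (psupp (poly_of_term t))"
  using finite_psupp_poly_of_terms[of "[t]"] by (simp add: poly_of_terms_single)

lemma pmult_poly_of_term_terms:
  "pmult (poly_of_term t) (poly_of_terms B) = poly_of_terms (List.bind B (mult_term t))"
  by (induction B) (simp_all add: poly_of_terms_Nil poly_of_terms_Cons poly_of_terms_append
      pmult_pzero_right pmult_padd_right pmult_poly_of_term finite_psupp_poly_of_term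
      finite_psupp_poly_of_terms)

lemma pmult_poly_of_terms: "pmult (poly_of_terms A) (poly_of_terms B) = poly_of_terms (mult_terms A B)"
  by (induction A) (simp_all add: mult_terms_def poly_of_terms_Nil poly_of_terms_Cons
      poly_of_terms_append pmult_pzero_left pmult_padd_left pmult_poly_of_term_terms
      finite_psupp_poly_of_term finite_psupp_poly_of_terms)

definition hbr_terms :: "complex \<Rightarrow> pterm list \<Rightarrow> pterm list \<Rightarrow> pterm list" where
  "hbr_terms s A B =
     mult_terms (List.bind A d_tau_term) (List.bind B d_t_term) @
     scale_terms (-1) (mult_terms (List.bind A d_t_term) (List.bind B d_tau_term)) @
     scale_terms s
       (mult_terms (List.bind A (d_odd_term 0)) (List.bind B (d_odd_term 2)) @
        mult_terms (List.bind A (d_odd_term 2)) (List.bind B (d_odd_term 0)) @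
        mult_terms (List.bind A (d_odd_term 1)) (List.bind B (d_odd_term 3)) @
        mult_terms (List.bind A (d_odd_term 3)) (List.bind B (d_odd_term 1)))"

definition pbracket_terms :: "pterm list \<Rightarrow> pterm list \<Rightarrow> pterm list" where
  "pbracket_terms A B =
     hbr_terms (-1) (List.bind A even_part_term) B @ hbr_terms 1 (List.bind A odd_part_term) B"

lemma hbr_poly_of_terms: "hbr s (poly_of_terms A) (poly_of_terms B) = poly_of_terms (hbr_terms s A B)"
  by (simp add: hbr_def hbr_terms_def fun_eq_iff d_t_poly_of_terms d_tau_poly_of_terms
      d_odd_poly_of_terms pmult_poly_of_terms poly_of_terms_append padd_def poly_of_terms_scale
      algebra_simps numeral_2_eq_2 numeral_3_eq_3)

lemma pbracket_poly_of_terms: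
  "pbracket (poly_of_terms A) (poly_of_terms B) = poly_of_terms (pbracket_terms A B)"
  by (simp add: pbracket_def pbracket_terms_def even_part_poly_of_terms odd_part_poly_of_terms
      hbr_poly_of_terms poly_of_terms_append)

section \<open>The representation \<open>\<rho>\<^sub>\<alpha>\<close>\<close>

lemma is_sp_iff_traceless: "is_sp X \<longleftrightarrow> X False False + X True True = 0"
proof -
  have mv: "mv X x r = X r False * x False + X r True * x True" for x r
    by (simp add: mv_def UNIV_bool)
  have trace: "psi (mv X x) y + psi x (mv X y) = (X False False + X True True) * psi x y" for x y
    unfolding psi_def mv by (simp add: algebra_simps)
  have "psi (ev False) (ev True) = 1"
    by (simp add: psi_def ev_def)
  then show ?thesis
    unfolding is_sp_def trace by (metis mult_1_right mult_zero_left)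
qed

lemma Gam_carrier_traceless:
  assumes "(X1, X2, X3, v) \<in> Gam_carrier"
  shows "X1 True True = - X1 False False" "X2 True True = - X2 False False"
    "X3 True True = - X3 False False"
  using assms by (auto simp: Gam_carrier_def is_sp_iff_traceless add_eq_0_iff)

definition gens_terms :: "complex \<Rightarrow> pterm list list" where
  "gens_terms \<alpha> =
    [ [((2, 0, (False, False, False, False)), 1)],
      [((0, 2, (False, False, False, False)), 1), ((-2, 0, (True, True, True, True)), -2 * \<alpha>)],
      [((1, 1, (False, False, False, False)), 1)],
      [((0, 0, (True, True, False, False)), 1)],
      [((0, 0, (False, False, True, True)), 1)],
      [((0, 0, (True, False, True, False)), 1), ((0, 0, (False, True, False, True)), 1)],
      [((0, 0, (True, False, False, True)), 1)],
      [((0, 0, (False, True, True, False)), 1)],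
      [((0, 0, (True, False, True, False)), 1), ((0, 0, (False, True, False, True)), -1)],
      [((1, 0, (False, False, True, False)), 1)],
      [((1, 0, (False, False, False, True)), 1)],
      [((1, 0, (True, False, False, False)), 1)],
      [((1, 0, (False, True, False, False)), 1)],
      [((0, 1, (True, False, False, False)), 1), ((-1, 0, (True, True, False, True)), \<alpha>)],
      [((0, 1, (False, True, False, False)), 1), ((-1, 0, (True, True, True, False)), -\<alpha>)],
      [((0, 1, (False, False, True, False)), 1), ((-1, 0, (False, True, True, True)), \<alpha>)],
      [((0, 1, (False, False, False, True)), 1), ((-1, 0, (True, False, True, True)), -\<alpha>)] ]"

lemma Gamma_gens_eq: "Gamma_gens \<alpha> = map poly_of_terms (gens_terms \<alpha>)"
  by (simp add: Gamma_gens_def gens_terms_def poly_of_terms_Cons poly_of_terms_Nil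
      poly_of_term_def mask_set_eq insert_commute)

lemma length_gens_terms: "length (gens_terms \<alpha>) = 17"
  by (simp add: gens_terms_def)

lemma length_Gamma_gens: "length (Gamma_gens \<alpha>) = 17"
  by (simp add: Gamma_gens_eq length_gens_terms)

text \<open>
  Coordinates of \<open>(X\<^sub>1, X\<^sub>2, X\<^sub>3, v)\<close> with respect to the preimages of \<open>E\<^sup>1, F\<^sup>1, \<dots>, D\<^sup>4\<close>.
  The scalars \<open>-1/4\<close>, \<open>\<plusminus>2\<i>\<close> and \<open>\<plusminus>\<i>\<close> are those for which the bracket of \<open>\<Gamma>(2, -1-\<alpha>, \<alpha>-1)\<close>
  goes over into the Poisson bracket.
\<close>

definition gam_coords :: "Gam \<Rightarrow> complex list" where
  "gam_coords x = (case x of (X1, X2, X3, v) \<Rightarrow>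
    [X1 False True, - X1 True False / 4, X1 False False,
     X2 False True, - X2 True False, X2 False False,
     X3 False True, X3 True False, X3 False False,
     -2 * \<i> * v False True True, 2 * \<i> * v False True False,
     2 * \<i> * v False False False, 2 * \<i> * v False False True,
     - \<i> * v True False False, - \<i> * v True False True,
     \<i> * v True True True, - \<i> * v True True False])"

definition rho :: "complex \<Rightarrow> Gam \<Rightarrow> P4" where
  "rho \<alpha> x = (\<lambda>m. \<Sum>k<17. gam_coords x ! k * (Gamma_gens \<alpha> ! k) m)"

definition rho_terms :: "complex \<Rightarrow> Gam \<Rightarrow> pterm list" where
  "rho_terms \<alpha> x = concat (map2 scale_terms (gam_coords x) (gens_terms \<alpha>))"

lemma length_gam_coords: "length (gam_coords x) = 17"
  by (cases x) (simp add: gam_coords_def)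

lemma poly_of_terms_linear_combination:
  "length cs = length Ls \<Longrightarrow>
   poly_of_terms (concat (map2 scale_terms cs Ls)) = (\<lambda>m. \<Sum>k<length cs. cs ! k * poly_of_terms (Ls ! k) m)"
proof (induction cs Ls rule: list_induct2)
  case Nil
  then show ?case by (simp add: poly_of_terms_Nil pzero_def)
next
  case (Cons c cs L Ls)
  then show ?case
    by (simp add: poly_of_terms_append padd_def poly_of_terms_scale sum.lessThan_Suc_shift
        del: sum.lessThan_Suc)
qed

lemma rho_eq_poly_of_terms: "rho \<alpha> x = poly_of_terms (rho_terms \<alpha> x)"
proof -
  have "rho \<alpha> x = (\<lambda>m. \<Sum>k<17. gam_coords x ! k * poly_of_terms (gens_terms \<alpha> ! k) m)"
    unfolding rho_def Gamma_gens_eq by (intro ext sum.cong) (simp_all add: length_gens_terms)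
  also have "\<dots> = poly_of_terms (rho_terms \<alpha> x)"
    unfolding rho_terms_def
    by (subst poly_of_terms_linear_combination) (simp_all add: length_gam_coords length_gens_terms)
  finally show ?thesis .
qed

lemma rho_in_P4_carrier: "rho \<alpha> x \<in> P4_carrier"
  by (simp add: rho_eq_poly_of_terms poly_of_terms_in_P4_carrier)

lemma gam_coords_gadd: "gam_coords (gadd x y) = map2 (+) (gam_coords x) (gam_coords y)"
  by (cases x; cases y) (simp add: gam_coords_def gadd_def madd_def algebra_simps)

lemma gam_coords_gscale: "gam_coords (gscale k x) = map ((*) k) (gam_coords x)"
  by (cases x) (simp add: gam_coords_def gscale_def algebra_simps)

lemma rho_gadd: "rho \<alpha> (gadd x y) = padd (rho \<alpha> x) (rho \<alpha> y)"
  by (simp add: rho_def padd_def gam_coords_gadd length_gam_coords sum.distrib[symmetric]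
      algebra_simps)

lemma rho_gscale: "rho \<alpha> (gscale k x) = pscale k (rho \<alpha> x)"
  by (simp add: rho_def pscale_def gam_coords_gscale length_gam_coords sum_distrib_left
      algebra_simps)

lemma odd_part_rho_even: "Gam_even x \<Longrightarrow> odd_part (rho \<alpha> x) = pzero"
  unfolding rho_eq_poly_of_terms odd_part_poly_of_terms
  by (rule poly_of_terms_zero, cases x)
    (simp add: Gam_even_def rho_terms_def gam_coords_def gens_terms_def scale_terms_def odd_part_term_def)

lemma even_part_rho_odd: "Gam_odd x \<Longrightarrow> even_part (rho \<alpha> x) = pzero"
  unfolding rho_eq_poly_of_terms even_part_poly_of_terms
  by (rule poly_of_terms_zero, cases x)
    (simp add: Gam_odd_def rho_terms_def gam_coords_def gens_terms_def scale_terms_def even_part_term_def)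

lemma rho_gbracket:
  assumes "x \<in> Gam_carrier" "y \<in> Gam_carrier"
  shows "rho \<alpha> (gbracket 2 (-1 - \<alpha>) (\<alpha> - 1) x y) = pbracket (rho \<alpha> x) (rho \<alpha> y)"
proof -
  obtain X1 X2 X3 v where x: "x = (X1, X2, X3, v)"
    by (cases x) auto
  obtain Y1 Y2 Y3 w where y: "y = (Y1, Y2, Y3, w)"
    by (cases y) auto
  note traceless =
    Gam_carrier_traceless[OF assms(1)[unfolded x]] Gam_carrier_traceless[OF assms(2)[unfolded y]]
  show ?thesis
    unfolding rho_eq_poly_of_terms pbracket_poly_of_terms x y
    by (rule poly_of_terms_eqI)
      (simp add: rho_terms_def gam_coords_def gens_terms_def scale_terms_def pbracket_terms_def
         hbr_terms_def mult_terms_def mult_term_def d_t_term_def d_tau_term_def d_odd_term_def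
         even_part_term_def odd_part_term_def mask_inversions_def gbracket_def madd_def mcomm_def
         oddbr1_def oddbr2_def oddbr3_def gact_def Pop_def psi_def ev_def UNIV_bool traceless;
       simp add: collect_terms_def; simp add: algebra_simps; simp add: field_simps)
qed

section \<open>Injectivity and image\<close>

definition sp_matrix :: "complex \<Rightarrow> complex \<Rightarrow> complex \<Rightarrow> mat2" where
  "sp_matrix a b d = (\<lambda>r q. if r then (if q then -a else d) else (if q then b else a))"

definition gam_of_coords :: "(nat \<Rightarrow> complex) \<Rightarrow> Gam" where
  "gam_of_coords c =
    (sp_matrix (c 2) (c 0) (-4 * c 1), sp_matrix (c 5) (c 3) (- c 4), sp_matrix (c 8) (c 6) (c 7),
     (\<lambda>a b d. if a
        then (if b then (if d then - \<i> * c 15 else \<i> * c 16) else (if d then \<i> * c 14 else \<i> * c 13))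
        else (if b then (if d then \<i> * c 9 / 2 else - \<i> * c 10 / 2)
                   else (if d then - \<i> * c 12 / 2 else - \<i> * c 11 / 2))))"

definition mono_coeff :: "P4 \<Rightarrow> mono_code \<Rightarrow> complex" where
  "mono_coeff f \<mu> = (case \<mu> of (j, i, s) \<Rightarrow> f (j, i, mask_set s))"

definition span_coords :: "P4 \<Rightarrow> complex list" where
  "span_coords f =
    [mono_coeff f (2, 0, (False, False, False, False)),
     mono_coeff f (0, 2, (False, False, False, False)),
     mono_coeff f (1, 1, (False, False, False, False)),
     mono_coeff f (0, 0, (True, True, False, False)),
     mono_coeff f (0, 0, (False, False, True, True)),
     (mono_coeff f (0, 0, (True, False, True, False)) + mono_coeff f (0, 0, (False, True, False, True))) / 2,
     mono_coeff f (0, 0, (True, False, False, True)),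
     mono_coeff f (0, 0, (False, True, True, False)),
     (mono_coeff f (0, 0, (True, False, True, False)) - mono_coeff f (0, 0, (False, True, False, True))) / 2,
     mono_coeff f (1, 0, (False, False, True, False)),
     mono_coeff f (1, 0, (False, False, False, True)),
     mono_coeff f (1, 0, (True, False, False, False)),
     mono_coeff f (1, 0, (False, True, False, False)),
     mono_coeff f (0, 1, (True, False, False, False)),
     mono_coeff f (0, 1, (False, True, False, False)),
     mono_coeff f (0, 1, (False, False, True, False)),
     mono_coeff f (0, 1, (False, False, False, True))]"

lemma gam_of_coords_in_carrier: "gam_of_coords c \<in> Gam_carrier"
  by (simp add: gam_of_coords_def Gam_carrier_def is_sp_iff_traceless sp_matrix_def)

lemma gam_coords_gam_of_coords: "gam_coords (gam_of_coords c) = map c [0..<17]"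
  by (simp add: gam_of_coords_def gam_coords_def sp_matrix_def upt_rec numeral_eq_Suc field_simps)

lemma gam_of_coords_gam_coords:
  assumes "x \<in> Gam_carrier"
  shows "gam_of_coords (nth (gam_coords x)) = x"
proof -
  obtain X1 X2 X3 v where x: "x = (X1, X2, X3, v)"
    by (cases x) auto
  note traceless = Gam_carrier_traceless[OF assms[unfolded x]]
  let ?c = "nth (gam_coords x)"
  have "sp_matrix (?c 2) (?c 0) (-4 * ?c 1) = X1"
    "sp_matrix (?c 5) (?c 3) (- ?c 4) = X2" "sp_matrix (?c 8) (?c 6) (?c 7) = X3"
    by (simp_all add: x gam_coords_def sp_matrix_def fun_eq_iff traceless numeral_eq_Suc)
  moreover have "snd (snd (snd (gam_of_coords ?c))) = v"
    by (simp add: x gam_of_coords_def gam_coords_def fun_eq_iff numeral_eq_Suc)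
  ultimately show ?thesis
    by (simp add: x gam_of_coords_def)
qed

lemma mono_coeff_poly_of_terms:
  "mono_coeff (poly_of_terms L) \<mu> = sum_list (map snd (filter (\<lambda>t. fst t = \<mu>) L))"
  by (cases \<mu>) (simp add: mono_coeff_def poly_of_terms_apply)

lemma span_coords_rho: "span_coords (rho \<alpha> x) = gam_coords x"
  unfolding rho_eq_poly_of_terms span_coords_def mono_coeff_poly_of_terms
  by (cases x) (simp add: rho_terms_def gam_coords_def gens_terms_def scale_terms_def)

lemma inj_on_rho: "inj_on (rho \<alpha>) Gam_carrier"
proof (rule inj_onI)
  fix x y
  assume "x \<in> Gam_carrier" "y \<in> Gam_carrier" "rho \<alpha> x = rho \<alpha> y"
  then show "x = y"
    by (metis gam_of_coords_gam_coords span_coords_rho)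
qed

lemma rho_image: "rho \<alpha> ` Gam_carrier = lin_span (Gamma_gens \<alpha>)"
proof
  show "rho \<alpha> ` Gam_carrier \<subseteq> lin_span (Gamma_gens \<alpha>)"
    by (auto simp: lin_span_def length_Gamma_gens rho_def)
next
  show "lin_span (Gamma_gens \<alpha>) \<subseteq> rho \<alpha> ` Gam_carrier"
  proof
    fix f
    assume "f \<in> lin_span (Gamma_gens \<alpha>)"
    then obtain c where "f = (\<lambda>m. \<Sum>k<17. c k * (Gamma_gens \<alpha> ! k) m)"
      by (auto simp: lin_span_def length_Gamma_gens)
    then have "rho \<alpha> (gam_of_coords c) = f"
      by (simp add: rho_def gam_coords_gam_of_coords)
    then show "f \<in> rho \<alpha> ` Gam_carrier"
      using gam_of_coords_in_carrier by blast
  qed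
qed

theorem proposition2p1:
  fixes \<alpha> :: complex
  shows "\<exists>\<rho>. is_superhom 2 (-1 - \<alpha>) (\<alpha> - 1) \<rho> \<and> inj_on \<rho> Gam_carrier \<and>
             \<rho> ` Gam_carrier = lin_span (Gamma_gens \<alpha>)"
proof (intro exI conjI)
  show "is_superhom 2 (-1 - \<alpha>) (\<alpha> - 1) (rho \<alpha>)"
    unfolding is_superhom_def pzero_def[symmetric]
    by (simp add: image_subset_iff rho_in_P4_carrier rho_gadd rho_gscale odd_part_rho_even
        even_part_rho_odd rho_gbracket)
  show "inj_on (rho \<alpha>) Gam_carrier"
    by (rule inj_on_rho)
  show "rho \<alpha> ` Gam_carrier = lin_span (Gamma_gens \<alpha>)"
    by (rule rho_image)
qed

end
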